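(* Fix $N>0$ (packet size in bits), $\epsilon\in(0,1)$ (block error probability) and a minimum blocklength $\hat m>0$. For $m>0$ and $\gamma>0$ let $$F(m,\gamma)=\sqrt{\frac{1}{m}\left(1-\frac{1}{(\gamma+1)^2}\right)}\,\frac{Q^{-1}(\epsilon)}{\ln 2}-\log_2(1+\gamma)+\frac{N}{m},$$ and let $\Gamma(m)$ denote the implicit function defined by $F(m,\Gamma(m))=0$, $\Gamma(m)>0$. If $$\frac{Q^{-1}(\epsilon)}{\sqrt{N}}\le \frac{2\sqrt{\ln 2}}{4-\sqrt{2}}=0.64394\ldots,$$ then the function $m\mapsto m\,\Gamma(m)$ is strictly decreasing on $\{m: m\ge \hat m\}$.
   Context: $Q^{-1}(\cdot)$ is the inverse of the Gaussian Q-function $Q(t)=\frac{1}{\sqrt{2\pi}}\int_t^\infty e^{-u^2/2}\,du$. The equation $F(m,\gamma)=0$ is the finite-blocklength achievable-rate relation $\frac{N}{m}=\log_2(1+\gamma)-\sqrt{\frac1m\big(1-\frac{1}{(1+\gamma)^2}\big)}\frac{Q^{-1}(\epsilon)}{\ln 2}$ for blocklength $m$ and SINR $\gamma$; $\Gamma(m)$ is the SINR required to send $N$ bits in $m$ channel uses with error probability $\epsilon$, and $m\Gamma(m)$ is (proportional to) the corresponding energy. *)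

theory Defs
  imports "HOL-Analysis.Analysis"
begin

definition gaussQ :: "real \<Rightarrow> real" where
  "gaussQ t = (1 / sqrt (2 * pi)) * integral {t..} (\<lambda>u. exp (- (u\<^sup>2) / 2))"

text \<open>Inverse of the Q-function (Q is a strictly decreasing bijection from the reals onto (0,1)).\<close>
definition gaussQinv :: "real \<Rightarrow> real" where
  "gaussQinv e = (THE t. gaussQ t = e)"

definition Ffb :: "nat \<Rightarrow> real \<Rightarrow> real \<Rightarrow> real \<Rightarrow> real" where
  "Ffb N eps m \<gamma> =
     sqrt ((1 / m) * (1 - 1 / (\<gamma> + 1)\<^sup>2)) * gaussQinv eps / ln 2
     - log 2 (1 + \<gamma>) + real N / m"

end

theory Submission
  imports Defs
begin

text \<open>With \<open>K = N ln 2\<close>, \<open>a = Q\<inverse>(\<epsilon>) / sqrt K\<close> and \<open>s = sqrt (K / m)\<close>, the relation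
  \<open>F(m, \<gamma>) = 0\<close> reads \<open>s\<^sup>2 + a sqrt (V \<gamma>) s = ln (1 + \<gamma>)\<close> with the dispersion
  \<open>V \<gamma> = 1 - 1 / (1 + \<gamma>)\<^sup>2\<close>, so \<open>s = \<sigma>(\<Gamma> m)\<close> for the positive root \<open>\<sigma> = rate_root a\<close> of this
  quadratic, and \<open>m \<Gamma>(m) = K / (\<sigma>(\<Gamma> m)\<^sup>2 / \<Gamma> m)\<close>.  Since \<open>\<sigma>\<close> is increasing, \<open>\<Gamma>\<close>
  decreases with \<open>m\<close>; it remains to see that \<open>\<sigma>(\<gamma>)\<^sup>2 / \<gamma>\<close> is decreasing, i.e. that the
  elasticity \<open>\<gamma> \<sigma>'(\<gamma>) / \<sigma>(\<gamma>)\<close> stays below \<open>1/2\<close>.  Using the Pade bound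
  \<open>ln (1 + \<gamma>) \<ge> 2 \<gamma> / (2 + \<gamma>)\<close>, this reduces to a rational inequality in \<open>\<gamma>\<close>, which holds as
  soon as \<open>a \<le> 4 / 5\<close>; the threshold on \<open>Q\<inverse>(\<epsilon>) / sqrt N\<close> guarantees this.\<close>

lemma ln_add_one_ge_pade:
  fixes x :: real
  assumes "0 \<le> x"
  shows "2 * x / (2 + x) \<le> ln (1 + x)"
proof -
  let ?f = "\<lambda>x::real. ln (1 + x) - 2 * x / (2 + x)"
  have "?f 0 \<le> ?f x"
  proof (rule DERIV_nonneg_imp_nondecreasing[OF assms])
    fix t :: real
    assume t: "0 \<le> t" "t \<le> x"
    have "(?f has_real_derivative 1 / (1 + t) - 4 / (2 + t)\<^sup>2) (at t)"
      using t by (auto intro!: derivative_eq_intros simp: power2_eq_square)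
    moreover have "1 / (1 + t) - 4 / (2 + t)\<^sup>2 = t\<^sup>2 / ((1 + t) * (2 + t)\<^sup>2)"
      using t by (simp add: divide_simps) algebra
    ultimately show "\<exists>y. (?f has_real_derivative y) (at t) \<and> 0 \<le> y"
      using t by auto
  qed
  then show ?thesis by simp
qed

definition sqrt_dispersion :: "real \<Rightarrow> real" where
  "sqrt_dispersion x = sqrt (1 - 1 / (x + 1)\<^sup>2)"

lemma dispersion_pos: "0 < x \<Longrightarrow> 0 < 1 - 1 / (x + 1)\<^sup>2"
  for x :: real
  by (simp add: power_less_one_iff)

lemma sqrt_dispersion_pos: "0 < x \<Longrightarrow> 0 < sqrt_dispersion x"
  by (simp add: sqrt_dispersion_def dispersion_pos)

lemma sqrt_dispersion_sq:
  assumes "0 < x"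
  shows "(sqrt_dispersion x)\<^sup>2 * (x + 1)\<^sup>2 = x * (x + 2)"
  using dispersion_pos[OF assms] assms
  by (simp add: sqrt_dispersion_def divide_simps) algebra

lemma sqrt_dispersion_has_derivative:
  assumes "0 < x"
  shows "(sqrt_dispersion has_real_derivative
           sqrt_dispersion x / (x * (x + 1) * (x + 2))) (at x)"
proof -
  have "((\<lambda>x. 1 - 1 / (x + 1)\<^sup>2) has_real_derivative 2 / (x + 1) ^ 3) (at x)"
    using assms by (auto intro!: derivative_eq_intros) (simp add: divide_simps, algebra)
  from DERIV_chain2[OF DERIV_real_sqrt[OF dispersion_pos[OF assms]] this]
  have "(sqrt_dispersion has_real_derivative
          inverse (sqrt_dispersion x) / 2 * (2 / (x + 1) ^ 3)) (at x)"
    unfolding sqrt_dispersion_def[abs_def] .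
  moreover have "inverse (sqrt_dispersion x) / 2 * (2 / (x + 1) ^ 3)
      = sqrt_dispersion x / (x * (x + 1) * (x + 2))"
    using assms sqrt_dispersion_pos[OF assms] sqrt_dispersion_sq[OF assms]
    by (simp add: divide_simps) algebra
  ultimately show ?thesis by simp
qed

definition rate_root :: "real \<Rightarrow> real \<Rightarrow> real" where
  "rate_root a x =
     (- a * sqrt_dispersion x + sqrt ((a * sqrt_dispersion x)\<^sup>2 + 4 * ln (1 + x))) / 2"

lemma rate_root_discriminant:
  "sqrt ((a * sqrt_dispersion x)\<^sup>2 + 4 * ln (1 + x)) = 2 * rate_root a x + a * sqrt_dispersion x"
  by (simp add: rate_root_def field_simps)

lemma rate_root_pos:
  assumes "0 < x"
  shows "0 < rate_root a x"
proof -
  have "sqrt ((a * sqrt_dispersion x)\<^sup>2) < sqrt ((a * sqrt_dispersion x)\<^sup>2 + 4 * ln (1 + x))"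
    using assms by (intro real_sqrt_less_mono) simp
  then show ?thesis by (simp add: rate_root_def)
qed

lemma two_rate_root_add_pos:
  assumes "0 < x"
  shows "0 < 2 * rate_root a x + a * sqrt_dispersion x"
  unfolding rate_root_discriminant[symmetric] using assms by (simp add: add_nonneg_pos)

lemma rate_root_eq:
  assumes "0 < x"
  shows "(rate_root a x)\<^sup>2 + a * sqrt_dispersion x * rate_root a x = ln (1 + x)"
proof -
  have "(2 * rate_root a x + a * sqrt_dispersion x)\<^sup>2 = (a * sqrt_dispersion x)\<^sup>2 + 4 * ln (1 + x)"
    unfolding rate_root_discriminant[symmetric] using assms by (simp add: add_nonneg_pos)
  then show ?thesis by algebra
qed

lemma rate_root_unique:
  assumes "0 < x" "0 < s" "s\<^sup>2 + a * sqrt_dispersion x * s = ln (1 + x)"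
  shows "s = rate_root a x"
proof -
  have "0 < s * (s + a * sqrt_dispersion x)"
    using assms by (simp add: power2_eq_square algebra_simps)
  then have "0 < 2 * s + a * sqrt_dispersion x"
    using assms(2) by (smt (verit) zero_less_mult_iff)
  moreover have "(2 * s + a * sqrt_dispersion x)\<^sup>2 = (a * sqrt_dispersion x)\<^sup>2 + 4 * ln (1 + x)"
    using assms(3)[symmetric] by (simp add: power2_eq_square algebra_simps)
  ultimately have "sqrt ((a * sqrt_dispersion x)\<^sup>2 + 4 * ln (1 + x)) = 2 * s + a * sqrt_dispersion x"
    by (intro real_sqrt_unique) auto
  then show ?thesis by (simp add: rate_root_def)
qed

lemma rate_root_has_derivative:
  assumes "0 < x"
  shows "(rate_root a has_real_derivative
           (1 / (1 + x) - a * rate_root a x * sqrt_dispersion x / (x * (x + 1) * (x + 2)))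
           / (2 * rate_root a x + a * sqrt_dispersion x)) (at x)"
proof -
  define s where "s = rate_root a x"
  let ?w = "sqrt_dispersion x"
  let ?dw = "?w / (x * (x + 1) * (x + 2))"
  have disc_pos: "0 < (a * ?w)\<^sup>2 + 4 * ln (1 + x)"
    using assms by (simp add: add_nonneg_pos)
  have "(rate_root a has_real_derivative
         (- a * ?dw + inverse (sqrt ((a * ?w)\<^sup>2 + 4 * ln (1 + x))) / 2
                      * (2 * (a * ?w) * (a * ?dw) + 4 / (1 + x))) / 2) (at x)"
    unfolding rate_root_def[abs_def] using assms disc_pos
    by (auto intro!: derivative_eq_intros sqrt_dispersion_has_derivative[OF assms] simp: ac_simps)
  moreover have "(- a * ?dw + inverse (sqrt ((a * ?w)\<^sup>2 + 4 * ln (1 + x))) / 2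
                      * (2 * (a * ?w) * (a * ?dw) + 4 / (1 + x))) / 2
      = (1 / (1 + x) - a * s * ?w / (x * (x + 1) * (x + 2))) / (2 * s + a * ?w)"
    using assms two_rate_root_add_pos[OF assms, of a]
    unfolding rate_root_discriminant s_def[symmetric] by (simp add: divide_simps) algebra
  ultimately show ?thesis unfolding s_def by metis
qed

lemma pade_gap_quadratic_bound:
  fixes t D :: real
  assumes t: "0 < t" and D: "t\<^sup>2 / ((2 + t) * (1 + t)) \<le> D"
  shows "D + t / (1 + t)
    < 6 * D\<^sup>2 * (t + 1) ^ 4 * (t + 2) / (t ^ 3 * (t + 3)\<^sup>2) + 2 * D * (t + 1) * (t + 2) / (t * (t + 3))"
proof -
  define D0 where "D0 = t\<^sup>2 / ((2 + t) * (1 + t))"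
  define X where "X = (t + 1) ^ 4 * (t + 2) / (t ^ 3 * (t + 3)\<^sup>2)"
  define Y where "Y = 2 * (t + 1) * (t + 2) / (t * (t + 3)) - 1"
  have nz: "t \<noteq> 0" "t + 3 \<noteq> 0" "2 + t \<noteq> 0" "1 + t \<noteq> 0" using t by auto
  have "0 < D0" "0 < X" using t by (simp_all add: D0_def X_def)
  moreover have "0 < Y"
    using t by (simp add: Y_def divide_simps) (simp add: algebra_simps add_pos_pos)
  ultimately have "6 * D0\<^sup>2 * X + D0 * Y \<le> 6 * D\<^sup>2 * X + D * Y"
    using D by (intro add_mono mult_right_mono mult_left_mono power_mono) (auto simp: D0_def)
  moreover have "6 * D0\<^sup>2 * X + D0 * Y = t / (1 + t) + 2 * t\<^sup>2 * (3 * t + 5) / ((2 + t) * (t + 3)\<^sup>2)"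
    using nz by (simp add: D0_def X_def Y_def divide_simps) algebra
  moreover have "0 < 2 * t\<^sup>2 * (3 * t + 5) / ((2 + t) * (t + 3)\<^sup>2)" using t by simp
  moreover have "6 * D\<^sup>2 * X + D * Y
      = 6 * D\<^sup>2 * (t + 1) ^ 4 * (t + 2) / (t ^ 3 * (t + 3)\<^sup>2) + 2 * D * (t + 1) * (t + 2) / (t * (t + 3)) - D"
    by (simp add: X_def Y_def algebra_simps)
  ultimately show ?thesis by linarith
qed

text \<open>For \<open>s = rate_root a t\<close> and \<open>w = sqrt_dispersion t\<close>, the left-hand side is
  \<open>2 t \<sigma>'(t) (2 s + a w)\<close> (see \<open>rate_root_has_derivative\<close>), so this says that \<open>\<sigma>\<close> has
  elasticity below \<open>1/2\<close>.\<close>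
lemma elasticity_lt_half_ineq:
  fixes t w s a :: real
  assumes t: "0 < t" and w: "0 < w" and w2: "w\<^sup>2 * (t + 1)\<^sup>2 = t * (t + 2)" and s: "0 < s"
    and l: "2 * t / (2 + t) \<le> s\<^sup>2 + a * w * s" and a: "a \<le> 4 / 5"
  shows "2 * t / (1 + t) - 2 * a * s * w / ((t + 1) * (t + 2)) < s * (2 * s + a * w)"
proof -
  define D where "D = s\<^sup>2 + a * w * s - t / (1 + t)"
  define c where "c = t * (t + 3) / ((t + 1) * (t + 2))"
  have nz: "t \<noteq> 0" "t + 3 \<noteq> 0" "t + 2 \<noteq> 0" "t + 1 \<noteq> 0" "w \<noteq> 0" using t w by auto
  have D0: "t\<^sup>2 / ((2 + t) * (1 + t)) \<le> D"
  proof -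
    have "2 * t / (2 + t) - t / (1 + t) = t\<^sup>2 / ((2 + t) * (1 + t))"
      using t by (simp add: field_simps power2_eq_square)
    then show ?thesis using l by (simp add: D_def)
  qed
  have Dpos: "0 < D" using D0 t by (smt (verit) divide_pos_pos mult_pos_pos zero_less_power)
  have cpos: "0 < c" using t by (simp add: c_def)
  have "a * s * w * c < 2 * D"
  proof (cases "a \<le> 0")
    case True
    then have "a * s * w * c \<le> 0"
      using s w cpos by (simp add: mult_nonpos_nonneg)
    then show ?thesis using Dpos by simp
  next
    case False
    define p where "p = a * s"
    define Q where "Q = 2 * D / (w * c)" \<comment> \<open>the value of \<open>p\<close> at which the claim is an equality\<close>
    have "0 < Q" using Dpos w cpos by (simp add: Q_def)
    have "(a * s)\<^sup>2 \<le> (4 / 5 * s)\<^sup>2"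
      using False a s by (intro power_mono) auto
    then have p_bound: "25 / 16 * p\<^sup>2 + w * p \<le> s\<^sup>2 + a * w * s"
      by (simp add: p_def power2_eq_square algebra_simps)
    have "w * Q = 2 * D * (t + 1) * (t + 2) / (t * (t + 3))"
      using nz by (simp add: Q_def c_def divide_simps)
    moreover have "3 / 2 * Q\<^sup>2 = 6 * D\<^sup>2 * (t + 1) ^ 4 * (t + 2) / (t ^ 3 * (t + 3)\<^sup>2)"
      using nz w2 by (simp add: Q_def c_def divide_simps) algebra
    ultimately have Q_bound: "s\<^sup>2 + a * w * s < 3 / 2 * Q\<^sup>2 + w * Q"
      using pade_gap_quadratic_bound[OF t D0] unfolding D_def by linarith
    have "p < Q"
    proof (rule ccontr)
      assume "\<not> p < Q"
      then have "Q\<^sup>2 \<le> p\<^sup>2" "w * Q \<le> w * p"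
        using \<open>0 < Q\<close> w by (auto intro: power_mono mult_left_mono)
      moreover have "0 \<le> Q\<^sup>2" by simp
      ultimately show False using p_bound Q_bound by linarith
    qed
    then show ?thesis
      using w cpos by (simp add: p_def Q_def pos_less_divide_eq mult.assoc mult.left_commute)
  qed
  moreover have "s * (2 * s + a * w) - (2 * t / (1 + t) - 2 * a * s * w / ((t + 1) * (t + 2)))
      = 2 * D - a * s * w * c"
    using nz by (simp add: D_def c_def divide_simps) algebra
  ultimately show ?thesis by linarith
qed

lemma rate_root_strict_mono:
  assumes a: "a \<le> 1"
  shows "strict_mono_on {0<..} (rate_root a)"
proof (rule strict_mono_onI)
  fix x y :: real
  assume "x \<in> {0<..}" "y \<in> {0<..}" "x < y"
  show "rate_root a x < rate_root a y"
  proof (rule DERIV_pos_imp_increasing[OF \<open>x < y\<close>])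
    fix t assume "x \<le> t" "t \<le> y"
    with \<open>x \<in> {0<..}\<close> have t: "0 < t" by simp
    let ?s = "rate_root a t" and ?w = "sqrt_dispersion t"
    have s: "0 < ?s" and w: "0 < ?w" using t by (simp_all add: rate_root_pos sqrt_dispersion_pos)
    have w2: "?w\<^sup>2 * (t + 1)\<^sup>2 = t * (t + 2)" using sqrt_dispersion_sq[OF t] .
    have "a * ?s * ?w < t * (t + 2)"
    proof (cases "a \<le> 0")
      case True
      then have "a * ?s * ?w \<le> 0" using s w by (simp add: mult_nonpos_nonneg)
      moreover have "0 < t * (t + 2)" using t by simp
      ultimately show ?thesis by linarith
    next
      case False
      have "?s\<^sup>2 \<le> ln (1 + t)"
        using rate_root_eq[OF t, of a] False s w by (smt (verit) mult_pos_pos)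
      also have "\<dots> \<le> t" using t by (intro ln_add_one_self_le_self) simp
      also have "t < (?w * (t + 1)\<^sup>2)\<^sup>2"
      proof -
        have "(?w * (t + 1)\<^sup>2)\<^sup>2 = t * ((t + 2) * (t + 1)\<^sup>2)"
          using w2 by algebra
        moreover have "1 < (t + 2) * (t + 1)\<^sup>2"
          using t by (simp add: algebra_simps power2_eq_square add_pos_pos)
        ultimately show ?thesis using t by simp
      qed
      finally have "?s < ?w * (t + 1)\<^sup>2"
        by (rule power_less_imp_less_base) (use w in simp)
      then have "?s * ?w < ?w\<^sup>2 * (t + 1)\<^sup>2"
        using w by (simp add: power2_eq_square)
      moreover have "a * ?s * ?w \<le> ?s * ?w" using a s w by simp
      ultimately show ?thesis using w2 by linarith
    qed
    then have "a * ?s * ?w / (t * (t + 1) * (t + 2)) < t * (t + 2) / (t * (t + 1) * (t + 2))"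
      using t by (intro divide_strict_right_mono) auto
    also have "\<dots> = 1 / (1 + t)" using t by simp
    finally have "0 < 1 / (1 + t) - a * ?s * ?w / (t * (t + 1) * (t + 2))" by simp
    with rate_root_has_derivative[OF t, of a] two_rate_root_add_pos[OF t, of a]
    show "\<exists>D. (rate_root a has_real_derivative D) (at t) \<and> 0 < D"
      by (blast intro: divide_pos_pos)
  qed
qed

lemma rate_root_sq_div_strict_antimono:
  assumes a: "a \<le> 4 / 5"
  shows "strict_antimono_on {0<..} (\<lambda>x. (rate_root a x)\<^sup>2 / x)"
proof (rule monotone_onI)
  fix x y :: real
  assume "x \<in> {0<..}" "y \<in> {0<..}" "x < y"
  show "(rate_root a y)\<^sup>2 / y < (rate_root a x)\<^sup>2 / x"
  proof (rule DERIV_neg_imp_decreasing[OF \<open>x < y\<close>])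
    fix t assume "x \<le> t" "t \<le> y"
    with \<open>x \<in> {0<..}\<close> have t: "0 < t" by simp
    let ?s = "rate_root a t" and ?w = "sqrt_dispersion t"
    define T where "T = 2 * ?s + a * ?w"
    define ds where "ds = (1 / (1 + t) - a * ?s * ?w / (t * (t + 1) * (t + 2))) / T"
    have s: "0 < ?s" and T: "0 < T"
      using t by (simp_all add: rate_root_pos two_rate_root_add_pos T_def)
    have "((\<lambda>x. (rate_root a x)\<^sup>2 / x) has_real_derivative (2 * ?s * ds * t - ?s\<^sup>2) / t\<^sup>2) (at t)"
      using t rate_root_has_derivative[OF t, of a]
      by (auto intro!: derivative_eq_intros simp: ds_def T_def power2_eq_square)
    moreover have "2 * t * ds < ?s"
    proof -
      have "2 * t * ds * T = 2 * t / (1 + t) - 2 * a * ?s * ?w / ((t + 1) * (t + 2))"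
        using t T by (simp add: ds_def divide_simps)
      also have "\<dots> < ?s * T"
        unfolding T_def
        using elasticity_lt_half_ineq[OF t sqrt_dispersion_pos[OF t] sqrt_dispersion_sq[OF t] s]
              a ln_add_one_ge_pade[of t] rate_root_eq[OF t, of a] t
        by simp
      finally show ?thesis using T by simp
    qed
    then have "(2 * ?s * ds * t - ?s\<^sup>2) / t\<^sup>2 < 0"
      using s t by (simp add: divide_neg_pos power2_eq_square mult_ac)
    ultimately show "\<exists>D. ((\<lambda>x. (rate_root a x)\<^sup>2 / x) has_real_derivative D) (at t) \<and> D < 0"
      by blast
  qed
qed

lemma Ffb_eq_0_iff_rate_root:
  assumes "0 < N" "0 < m" "0 < \<gamma>"
  shows "Ffb N eps m \<gamma> = 0 \<longleftrightarrow>
    sqrt (N * ln 2 / m) = rate_root (gaussQinv eps / sqrt (N * ln 2)) \<gamma>"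
proof -
  define K where "K = N * ln (2::real)"
  define a where "a = gaussQinv eps / sqrt K"
  define s where "s = sqrt (K / m)"
  have K: "0 < K" using assms by (simp add: K_def)
  have s: "0 < s" using K assms by (simp add: s_def)
  have "a * sqrt_dispersion \<gamma> * s = sqrt (1 / m * (1 - 1 / (\<gamma> + 1)\<^sup>2)) * gaussQinv eps"
    using K by (simp add: a_def s_def sqrt_dispersion_def real_sqrt_mult real_sqrt_divide)
  then have "Ffb N eps m \<gamma> * ln 2 = s\<^sup>2 + a * sqrt_dispersion \<gamma> * s - ln (1 + \<gamma>)"
    using K assms by (simp add: Ffb_def s_def K_def log_def field_simps)
  then have "Ffb N eps m \<gamma> = 0 \<longleftrightarrow> s\<^sup>2 + a * sqrt_dispersion \<gamma> * s = ln (1 + \<gamma>)"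
    by auto
  also have "\<dots> \<longleftrightarrow> s = rate_root a \<gamma>"
    using rate_root_unique[OF assms(3) s] rate_root_eq[OF assms(3)] by blast
  finally show ?thesis by (simp add: K_def a_def s_def)
qed

text \<open>Only the weaker bound \<open>4 / 5\<close>, rather than \<open>2 / (4 - sqrt 2) = 0.7735...\<close>, is needed
  for the elasticity estimate.\<close>
lemma threshold_rescaled_le:
  fixes q n :: real
  assumes "q / sqrt n \<le> 2 * sqrt (ln 2) / (4 - sqrt 2)"
  shows "q / sqrt (n * ln 2) \<le> 4 / 5"
proof -
  have "q / sqrt (n * ln 2) = q / sqrt n / sqrt (ln 2)"
    by (simp add: real_sqrt_mult)
  also have "\<dots> \<le> 2 * sqrt (ln 2) / (4 - sqrt 2) / sqrt (ln 2)"
    using assms by (intro divide_right_mono) auto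
  also have "\<dots> = 2 / (4 - sqrt 2)" by simp
  also have "\<dots> \<le> 4 / 5"
    using real_le_lsqrt[of "3 / 2" 2] by (simp add: power2_eq_square divide_simps)
  finally show ?thesis .
qed

theorem lemma1:
  fixes N :: nat and eps mhat :: real and \<Gamma> :: "real \<Rightarrow> real"
  assumes "N > 0"
    and "0 < eps" and "eps < 1"
    and "mhat > 0"
    and "\<And>m. m \<ge> mhat \<Longrightarrow> \<Gamma> m > 0 \<and> Ffb N eps m (\<Gamma> m) = 0"
    and "gaussQinv eps / sqrt (real N) \<le> 2 * sqrt (ln 2) / (4 - sqrt 2)"
  shows "\<forall>m1 m2. mhat \<le> m1 \<longrightarrow> m1 < m2 \<longrightarrow> m2 * \<Gamma> m2 < m1 * \<Gamma> m1"
proof (intro allI impI)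
  fix m1 m2 :: real
  assume m1: "mhat \<le> m1" and m12: "m1 < m2"
  define K where "K = N * ln (2::real)"
  define a where "a = gaussQinv eps / sqrt K"
  have K: "0 < K" using assms(1) by (simp add: K_def)
  have a: "a \<le> 4 / 5"
    using threshold_rescaled_le assms(6) by (simp add: a_def K_def)
  have root: "sqrt (K / m) = rate_root a (\<Gamma> m)" and pos: "0 < \<Gamma> m" if "mhat \<le> m" for m
    using assms(1,4,5) Ffb_eq_0_iff_rate_root[of N m "\<Gamma> m" eps] that by (simp_all add: K_def a_def)
  have energy: "m * \<Gamma> m = K / ((rate_root a (\<Gamma> m))\<^sup>2 / \<Gamma> m)" if "mhat \<le> m" for m
    using root[OF that, symmetric] K assms(4) that by simp
  have "sqrt (K / m2) < sqrt (K / m1)"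
    using K m1 m12 assms(4) by (simp add: divide_strict_left_mono)
  then have "rate_root a (\<Gamma> m2) < rate_root a (\<Gamma> m1)"
    using root m1 m12 by simp
  then have "\<Gamma> m2 < \<Gamma> m1"
    using strict_mono_on_less[OF rate_root_strict_mono] a pos m1 m12 by simp
  then have "(rate_root a (\<Gamma> m1))\<^sup>2 / \<Gamma> m1 < (rate_root a (\<Gamma> m2))\<^sup>2 / \<Gamma> m2"
    using monotone_onD[OF rate_root_sq_div_strict_antimono[OF a]] pos m1 m12 by simp
  then have "K / ((rate_root a (\<Gamma> m2))\<^sup>2 / \<Gamma> m2) < K / ((rate_root a (\<Gamma> m1))\<^sup>2 / \<Gamma> m1)"
    using K pos[OF m1] pos[of m2] rate_root_pos[OF pos[OF m1], of a] rate_root_pos[OF pos[of m2], of a] m1 m12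
    by (intro divide_strict_left_mono mult_pos_pos divide_pos_pos) auto
  then show "m2 * \<Gamma> m2 < m1 * \<Gamma> m1"
    using energy m1 m12 by simp
qed

end
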